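(* Let $\mu\in\mathcal P_2(\mathbb R^d)$, $N\ge1$ and let $\Gamma_{2,N}$ be a quadratic optimal $N$-quantizer of $\mu$. Then for any probability measure $\nu$ on $\mathbb R^d$ such that $\hat\mu^{\Gamma_{2,N}}\le_{cvx}\nu\le_{cvx}\mu$, $\Gamma_{2,N}$ is a quadratic optimal $N$-quantizer of $\nu$ and $\hat\nu^{\Gamma_{2,N}}=\hat\mu^{\Gamma_{2,N}}$.
   Context: $\mu\le_{cvx}\nu$ means $\int\varphi\,d\mu\le\int\varphi\,d\nu$ for all convex $\varphi:\mathbb R^d\to\mathbb R$. A quadratic optimal $N$-quantizer of a probability measure $\mu$ with finite second moment is a set $\Gamma\subset\mathbb R^d$ with $|\Gamma|\le N$ minimizing $\int\mathrm{dist}(x,\Gamma)^2\mu(dx)$ over all such sets. For such $\Gamma$, $\hat\mu^\Gamma=\mu\circ\mathrm{Proj}_\Gamma^{-1}$ where $\mathrm{Proj}_\Gamma:\mathbb R^d\to\Gamma$ is any Borel map with $|x-\mathrm{Proj}_\Gamma(x)|=\mathrm{dist}(x,\Gamma)$ (the image does not depend on the choice). *)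

theory Defs
  imports "HOL-Probability.Probability"
begin

text \<open>Probability measures on the Borel sets of R^d (d arbitrary, modelled by a
euclidean_space type) with finite second moment.\<close>
definition P2 :: "'a::euclidean_space measure \<Rightarrow> bool" where
  "P2 M \<longleftrightarrow> prob_space M \<and> sets M = sets borel \<and> integrable M (\<lambda>x. (norm x)^2)"

text \<open>Integrals of convex functions are taken in the extended sense
(values in (-inf, +inf]); non-integrability w.r.t. nu means the nu-integral is +inf.\<close>
definition cvx_le :: "'a::euclidean_space measure \<Rightarrow> 'a measure \<Rightarrow> bool" where
  "cvx_le \<mu> \<nu> \<longleftrightarrow> (\<forall>\<phi>::'a \<Rightarrow> real. convex_on UNIV \<phi> \<longrightarrow> integrable \<nu> \<phi> \<longrightarrow>
      integrable \<mu> \<phi> \<and> (\<integral>x. \<phi> x \<partial>\<mu>) \<le> (\<integral>x. \<phi> x \<partial>\<nu>))"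

definition distortion :: "'a::euclidean_space measure \<Rightarrow> 'a set \<Rightarrow> ennreal" where
  "distortion \<mu> \<Gamma> = (\<integral>\<^sup>+ x. ennreal ((infdist x \<Gamma>)^2) \<partial>\<mu>)"

definition admissible_codebook :: "nat \<Rightarrow> 'a set \<Rightarrow> bool" where
  "admissible_codebook N \<Gamma> \<longleftrightarrow> finite \<Gamma> \<and> \<Gamma> \<noteq> {} \<and> card \<Gamma> \<le> N"

definition opt_quantizer :: "'a::euclidean_space measure \<Rightarrow> nat \<Rightarrow> 'a set \<Rightarrow> bool" where
  "opt_quantizer \<mu> N \<Gamma> \<longleftrightarrow> P2 \<mu> \<and> admissible_codebook N \<Gamma> \<and>
     (\<forall>\<Gamma>'. admissible_codebook N \<Gamma>' \<longrightarrow> distortion \<mu> \<Gamma> \<le> distortion \<mu> \<Gamma>')"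

definition nearest_proj :: "'a::euclidean_space set \<Rightarrow> ('a \<Rightarrow> 'a) \<Rightarrow> bool" where
  "nearest_proj \<Gamma> p \<longleftrightarrow> p \<in> borel_measurable borel \<and> (\<forall>x. p x \<in> \<Gamma> \<and> dist x (p x) = infdist x \<Gamma>)"

definition qproj :: "'a::euclidean_space set \<Rightarrow> 'a \<Rightarrow> 'a" where
  "qproj \<Gamma> = (SOME p. nearest_proj \<Gamma> p)"

definition quant_image :: "'a::euclidean_space measure \<Rightarrow> 'a set \<Rightarrow> 'a measure" where
  "quant_image \<mu> \<Gamma> = distr \<mu> borel (qproj \<Gamma>)"

end

theory Submission
  imports Defs
begin

text \<open>For a finite codebook \<open>\<Gamma>\<close> the function
  \<open>\<phi>\<^sub>\<Gamma>(x) = max\<^bsub>c\<in>\<Gamma>\<^esub> (2\<langle>c,x\<rangle> - |c|\<^sup>2) = |x|\<^sup>2 - d(x,\<Gamma>)\<^sup>2\<close> is convex. If \<open>\<Gamma>\<close> is optimal for \<open>\<mu>\<close>,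
  stationarity (every codeword is the barycentre of its cell) gives \<open>\<integral>\<phi>\<^sub>\<Gamma> d\<mu> = \<integral>\<phi>\<^sub>\<Gamma> d\<mu>\<^sup>\<Gamma>\<close>, so the
  convex sandwich forces \<open>\<integral>\<phi>\<^sub>\<Gamma> d\<nu> = \<integral>\<phi>\<^sub>\<Gamma> d\<mu>\<close>, while \<open>\<integral>\<phi>\<^sub>\<Gamma>' d\<nu> \<le> \<integral>\<phi>\<^sub>\<Gamma>' d\<mu>\<close> for every other
  codebook \<open>\<Gamma>'\<close>; as the distortion is \<open>\<integral>|x|\<^sup>2 d\<nu> - \<integral>\<phi>\<^sub>\<Gamma> d\<nu>\<close>, \<open>\<Gamma>\<close> is optimal for \<open>\<nu>\<close>.
  Lowering the weight of one codeword in \<open>\<phi>\<^sub>\<Gamma>\<close> shows that every open Voronoi cell carries at least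
  as much \<open>\<nu>\<close>-mass as \<open>\<mu>\<close>-mass. Ties are \<open>\<mu>\<close>-null, again by stationarity, and the cell masses
  of both measures sum to one, so they agree.\<close>

definition affine_gain :: "'a::real_inner \<Rightarrow> 'a \<Rightarrow> real" where
  "affine_gain c x = 2 * (c \<bullet> x) - (norm c)\<^sup>2"

definition max_gain :: "'a::real_inner set \<Rightarrow> ('a \<Rightarrow> real) \<Rightarrow> 'a \<Rightarrow> real" where
  "max_gain G w x = Max ((\<lambda>c. affine_gain c x + w c) ` G)"

lemma dist_sq_eq_affine_gain: "(dist x c)\<^sup>2 = (norm x)\<^sup>2 - affine_gain c x"
  unfolding affine_gain_def dist_norm
  by (simp add: power2_norm_eq_inner inner_diff_left inner_diff_right inner_commute)

lemma affine_gain_convex_comb: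
  "affine_gain c ((1 - u) *\<^sub>R x + u *\<^sub>R y) = (1 - u) * affine_gain c x + u * affine_gain c y"
  unfolding affine_gain_def by (simp add: inner_add_right algebra_simps)

lemma max_gain_ge: "finite G \<Longrightarrow> c \<in> G \<Longrightarrow> affine_gain c x + w c \<le> max_gain G w x"
  unfolding max_gain_def by (intro Max_ge) auto

lemma max_gain_attained:
  assumes "finite G" "G \<noteq> {}"
  obtains c where "c \<in> G" "max_gain G w x = affine_gain c x + w c"
proof -
  have "max_gain G w x \<in> (\<lambda>c. affine_gain c x + w c) ` G"
    unfolding max_gain_def using assms by (intro Max_in) auto
  then show ?thesis using that by blast
qed

lemma convex_on_max_gain:
  assumes "finite G" "G \<noteq> {}"
  shows "convex_on UNIV (max_gain G w)"
proof (rule convex_onI)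
  fix t :: real and x y :: 'a
  assume t: "0 < t" "t < 1"
  obtain c where c: "c \<in> G" "max_gain G w ((1 - t) *\<^sub>R x + t *\<^sub>R y) = affine_gain c ((1 - t) *\<^sub>R x + t *\<^sub>R y) + w c"
    using max_gain_attained[OF assms] by blast
  have "affine_gain c ((1 - t) *\<^sub>R x + t *\<^sub>R y) + w c = (1 - t) * (affine_gain c x + w c) + t * (affine_gain c y + w c)"
    unfolding affine_gain_convex_comb by (simp add: algebra_simps)
  also have "\<dots> \<le> (1 - t) * max_gain G w x + t * max_gain G w y"
    using t max_gain_ge[OF assms(1) c(1)] by (intro add_mono mult_left_mono) auto
  finally show "max_gain G w ((1 - t) *\<^sub>R x + t *\<^sub>R y) \<le> (1 - t) * max_gain G w x + t * max_gain G w y"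
    using c by simp
qed simp

lemma infdist_attained:
  fixes G :: "'a::heine_borel set"
  assumes "finite G" "G \<noteq> {}"
  obtains c where "c \<in> G" "infdist x G = dist x c"
  using infdist_attains_inf[of G x] assms finite_imp_closed by blast

lemma max_gain_zero:
  fixes G :: "'a::euclidean_space set"
  assumes "finite G" "G \<noteq> {}"
  shows "max_gain G (\<lambda>_. 0) x = (norm x)\<^sup>2 - (infdist x G)\<^sup>2"
proof (rule antisym)
  obtain c where c: "c \<in> G" "max_gain G (\<lambda>_. 0) x = affine_gain c x + 0"
    by (rule max_gain_attained[OF assms])
  have "(infdist x G)\<^sup>2 \<le> (dist x c)\<^sup>2"
    using infdist_le[OF c(1)] by (simp add: power_mono infdist_nonneg)
  then show "max_gain G (\<lambda>_. 0) x \<le> (norm x)\<^sup>2 - (infdist x G)\<^sup>2"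
    using c dist_sq_eq_affine_gain[of x c] by simp
next
  obtain c where c: "c \<in> G" "infdist x G = dist x c"
    using infdist_attained[OF assms] by blast
  show "(norm x)\<^sup>2 - (infdist x G)\<^sup>2 \<le> max_gain G (\<lambda>_. 0) x"
    using max_gain_ge[OF assms(1) c(1), of x "\<lambda>_. 0"] c dist_sq_eq_affine_gain[of x c] by simp
qed

lemma max_gain_perturb_bound:
  assumes "finite G" "G \<noteq> {}" "\<And>c. c \<in> G \<Longrightarrow> \<bar>w c\<bar> \<le> B"
  shows "\<bar>max_gain G w x - max_gain G (\<lambda>_. 0) x\<bar> \<le> B"
proof -
  obtain c where c: "c \<in> G" "max_gain G w x = affine_gain c x + w c"
    using max_gain_attained[OF assms(1,2)] by blast
  obtain d where d: "d \<in> G" "max_gain G (\<lambda>_. 0) x = affine_gain d x + 0"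
    by (rule max_gain_attained[OF assms(1,2)])
  show ?thesis
    using max_gain_ge[OF assms(1) c(1), of x "\<lambda>_. 0"] max_gain_ge[OF assms(1) d(1), of x w]
      c d assms(3)[OF c(1)] assms(3)[OF d(1)]
    by (simp add: abs_le_iff)
qed

lemma borel_measurable_max_gain [measurable]:
  fixes G :: "'a::euclidean_space set"
  assumes "finite G"
  shows "max_gain G w \<in> borel_measurable borel"
  unfolding max_gain_def affine_gain_def using assms by measurable

lemma measurable_sets_borelI:
  "sets M = sets borel \<Longrightarrow> f \<in> borel_measurable borel \<Longrightarrow> f \<in> borel_measurable M"
  using measurable_cong_sets[of M borel borel borel] by simp

lemma P2D:
  assumes "P2 M"
  shows "prob_space M" "sets M = sets borel" "integrable M (\<lambda>x. (norm x)\<^sup>2)"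
  using assms unfolding P2_def by auto

lemma integrable_quadratic_growth:
  fixes f :: "'a::euclidean_space \<Rightarrow> real"
  assumes M: "P2 M" and f: "f \<in> borel_measurable borel"
    and growth: "\<And>x. \<bar>f x\<bar> \<le> C * (norm x)\<^sup>2 + D"
  shows "integrable M f"
proof (rule Bochner_Integration.integrable_bound)
  interpret prob_space M by (rule P2D(1)[OF M])
  show "integrable M (\<lambda>x. C * (norm x)\<^sup>2 + D)"
    using P2D(3)[OF M] by simp
  show "f \<in> borel_measurable M" by (rule measurable_sets_borelI[OF P2D(2)[OF M] f])
  show "AE x in M. norm (f x) \<le> norm (C * (norm x)\<^sup>2 + D)"
    using growth by (intro AE_I2) (smt (verit) real_norm_def)
qed

lemma infdist_sq_le:
  assumes "c \<in> G"
  shows "(infdist x G)\<^sup>2 \<le> 2 * (norm x)\<^sup>2 + 2 * (norm c)\<^sup>2"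
proof -
  have "infdist x G \<le> norm x + norm c"
    using infdist_le[OF assms, of x] norm_triangle_ineq4[of x c] by (simp add: dist_norm)
  then have "(infdist x G)\<^sup>2 \<le> (norm x + norm c)\<^sup>2" by (simp add: power_mono infdist_nonneg)
  also have "\<dots> \<le> 2 * (norm x)\<^sup>2 + 2 * (norm c)\<^sup>2"
    using zero_le_power2[of "norm x - norm c"] unfolding power2_sum power2_diff by linarith
  finally show ?thesis .
qed

lemma borel_measurable_infdist [measurable]: "(\<lambda>x. infdist x G) \<in> borel_measurable borel"
  by (intro borel_measurable_continuous_onI continuous_on_infdist continuous_on_id)

lemma integrable_infdist_sq:
  assumes "P2 M" "c \<in> G"
  shows "integrable M (\<lambda>x. (infdist x G)\<^sup>2)"
  using infdist_sq_le[OF assms(2)]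
  by (intro integrable_quadratic_growth[OF assms(1), of _ 2 "2 * (norm c)\<^sup>2"]) auto

lemma integrable_max_gain:
  assumes M: "P2 M" and G: "finite G" "G \<noteq> {}" and w_bound: "\<And>c. c \<in> G \<Longrightarrow> \<bar>w c\<bar> \<le> B"
  shows "integrable M (max_gain G w)"
proof -
  obtain c where c: "c \<in> G" using G by auto
  have "\<bar>max_gain G w x\<bar> \<le> 3 * (norm x)\<^sup>2 + (2 * (norm c)\<^sup>2 + B)" for x
    using max_gain_perturb_bound[of G w B x, OF G w_bound] max_gain_zero[OF G, of x] infdist_sq_le[OF c, of x]
      zero_le_power2[of "infdist x G"] zero_le_power2[of "norm x"]
    unfolding abs_le_iff by linarith
  then show ?thesis by (intro integrable_quadratic_growth[OF M]) (use G in auto)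
qed

lemma integrable_indicator_inner:
  fixes M :: "'a::euclidean_space measure"
  assumes M: "P2 M" and A: "A \<in> sets borel"
  shows "integrable M (\<lambda>x. indicator A x * ((x - a) \<bullet> v))"
proof (rule integrable_quadratic_growth[OF M])
  show "(\<lambda>x. indicator A x * ((x - a) \<bullet> v)) \<in> borel_measurable borel"
    using A by measurable
  fix x :: 'a
  have "\<bar>indicator A x * ((x - a) \<bullet> v)\<bar> \<le> norm (x - a) * norm v"
    using Cauchy_Schwarz_ineq2[of "x - a" v] by (simp add: indicator_def)
  also have "\<dots> \<le> ((norm x)\<^sup>2 + 1 + norm a) * norm v"
  proof (rule mult_right_mono)
    have "2 * norm x \<le> (norm x)\<^sup>2 + 1"
      using zero_le_power2[of "norm x - 1"] by (simp add: power2_diff)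
    then have "norm x \<le> (norm x)\<^sup>2 + 1"
      using norm_ge_zero[of x] by linarith
    then show "norm (x - a) \<le> (norm x)\<^sup>2 + 1 + norm a"
      using norm_triangle_ineq4[of x a] by linarith
  qed simp
  finally show "\<bar>indicator A x * ((x - a) \<bullet> v)\<bar> \<le> norm v * (norm x)\<^sup>2 + (norm v + norm a * norm v)"
    by (simp add: algebra_simps)
qed

lemma opt_quantizerD:
  assumes "opt_quantizer M N G"
  shows "P2 M" "finite G" "G \<noteq> {}" "admissible_codebook N G"
    "\<And>G'. admissible_codebook N G' \<Longrightarrow> distortion M G \<le> distortion M G'"
  using assms unfolding opt_quantizer_def admissible_codebook_def by auto

lemma distortion_eq_integral:
  assumes "P2 M" "c \<in> G"
  shows "distortion M G = ennreal (\<integral>x. (infdist x G)\<^sup>2 \<partial>M)"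
  unfolding distortion_def
  by (rule nn_integral_eq_integral[OF integrable_infdist_sq[OF assms]]) auto

lemma integral_infdist_sq_le_if_opt_quantizer:
  assumes opt: "opt_quantizer M N G" and G': "admissible_codebook N G'"
  shows "(\<integral>x. (infdist x G)\<^sup>2 \<partial>M) \<le> (\<integral>x. (infdist x G')\<^sup>2 \<partial>M)"
proof -
  note o = opt_quantizerD[OF opt]
  obtain c c' where "c \<in> G" "c' \<in> G'"
    using o(3) G' unfolding admissible_codebook_def by auto
  then have "ennreal (\<integral>x. (infdist x G)\<^sup>2 \<partial>M) \<le> ennreal (\<integral>x. (infdist x G')\<^sup>2 \<partial>M)"
    using o(5)[OF G'] distortion_eq_integral[OF o(1)] by metis
  then show ?thesis by (simp add: ennreal_le_iff integral_nonneg_AE)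
qed

lemma admissible_codebook_replace:
  assumes "admissible_codebook N G" "a \<in> G"
  shows "admissible_codebook N (insert b (G - {a}))"
proof -
  have "card (insert b (G - {a})) \<le> Suc (card (G - {a}))"
    using assms(1) unfolding admissible_codebook_def by (simp add: card_insert_if)
  also have "\<dots> = card G"
    using assms card_Diff1_less[of G a] unfolding admissible_codebook_def
    by (simp add: card_Diff_singleton)
  finally show ?thesis using assms(1) unfolding admissible_codebook_def by auto
qed

lemma dist_sq_shift:
  "(dist x (a + t *\<^sub>R v))\<^sup>2 = (dist x a)\<^sup>2 + t\<^sup>2 * (norm v)\<^sup>2 - 2 * t * ((x - a) \<bullet> v)"
  unfolding dist_norm power2_norm_eq_inner
  by (simp add: inner_diff_left inner_diff_right inner_add_left inner_add_right inner_commute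
      algebra_simps power2_eq_square)

lemma infdist_sq_move_codeword:
  assumes in_A: "\<And>x. x \<in> A \<Longrightarrow> dist x a = infdist x G"
    and out_A: "\<And>x. x \<notin> A \<Longrightarrow> \<exists>b\<in>G. b \<noteq> a \<and> dist x b = infdist x G"
  shows "(infdist x (insert (a + t *\<^sub>R v) (G - {a})))\<^sup>2
    \<le> (infdist x G)\<^sup>2 + t\<^sup>2 * (norm v)\<^sup>2 * indicator A x - 2 * t * (indicator A x * ((x - a) \<bullet> v))"
proof (cases "x \<in> A")
  case True
  have "infdist x (insert (a + t *\<^sub>R v) (G - {a})) \<le> dist x (a + t *\<^sub>R v)"
    by (rule infdist_le) simp
  then have "(infdist x (insert (a + t *\<^sub>R v) (G - {a})))\<^sup>2 \<le> (dist x (a + t *\<^sub>R v))\<^sup>2"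
    by (simp add: power_mono infdist_nonneg)
  then show ?thesis using True in_A[OF True] by (simp add: dist_sq_shift)
next
  case False
  then obtain b where b: "b \<in> G" "b \<noteq> a" "dist x b = infdist x G" using out_A by blast
  then have "infdist x (insert (a + t *\<^sub>R v) (G - {a})) \<le> infdist x G"
    using infdist_le[of b "insert (a + t *\<^sub>R v) (G - {a})" x] by simp
  then show ?thesis using False by (simp add: power_mono infdist_nonneg)
qed

lemma nonneg_quadratic_imp_zero:
  fixes c K :: real
  assumes "K \<ge> 0" "\<And>t. 0 \<le> t\<^sup>2 * K - 2 * t * c"
  shows "c = 0"
proof -
  define t where "t = c / (K + 1)"
  have c: "c = (K + 1) * t" unfolding t_def using assms(1) by simp
  have "0 \<le> t\<^sup>2 * K - 2 * t * c" by (rule assms(2))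
  also have "\<dots> = - (t\<^sup>2 * (K + 2))" unfolding c by (simp add: algebra_simps power2_eq_square)
  finally have "t = 0" using assms(1)
    by (smt (verit) mult_eq_0_iff mult_nonneg_nonneg zero_le_power2 power_eq_0_iff)
  then show ?thesis using c by simp
qed

lemma opt_quantizer_stationary:
  fixes M :: "'a::euclidean_space measure"
  assumes opt: "opt_quantizer M N G" and a: "a \<in> G" and A: "A \<in> sets borel"
    and in_A: "\<And>x. x \<in> A \<Longrightarrow> dist x a = infdist x G"
    and out_A: "\<And>x. x \<notin> A \<Longrightarrow> \<exists>b\<in>G. b \<noteq> a \<and> dist x b = infdist x G"
  shows "(\<integral>x. indicator A x * ((x - a) \<bullet> v) \<partial>M) = 0"
proof (rule nonneg_quadratic_imp_zero)
  note o = opt_quantizerD[OF opt]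
  interpret prob_space M by (rule P2D(1)[OF o(1)])
  have A_M: "A \<in> sets M" using A P2D(2)[OF o(1)] by simp
  show "0 \<le> (norm v)\<^sup>2 * measure M A" by simp
  fix t :: real
  define G' where "G' = insert (a + t *\<^sub>R v) (G - {a})"
  have iG: "integrable M (\<lambda>x. (infdist x G)\<^sup>2)" by (rule integrable_infdist_sq[OF o(1) a])
  have iA: "integrable M (\<lambda>x. indicator A x * ((x - a) \<bullet> v))"
    by (rule integrable_indicator_inner[OF o(1) A])
  have iI: "integrable M (indicator A :: 'a \<Rightarrow> real)" using A_M by (simp add: emeasure_eq_measure)
  have "(\<integral>x. (infdist x G)\<^sup>2 \<partial>M) \<le> (\<integral>x. (infdist x G')\<^sup>2 \<partial>M)"
    unfolding G'_def by (rule integral_infdist_sq_le_if_opt_quantizer[OF opt admissible_codebook_replace[OF o(4) a]])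
  also have "\<dots> \<le> (\<integral>x. (infdist x G)\<^sup>2 + t\<^sup>2 * (norm v)\<^sup>2 * indicator A x
      - 2 * t * (indicator A x * ((x - a) \<bullet> v)) \<partial>M)"
    unfolding G'_def using iG iA iI
    by (intro integral_mono infdist_sq_move_codeword[OF in_A out_A] integrable_infdist_sq[OF o(1) insertI1]
        Bochner_Integration.integrable_diff Bochner_Integration.integrable_add integrable_mult_right) auto
  also have "\<dots> = (\<integral>x. (infdist x G)\<^sup>2 \<partial>M) + t\<^sup>2 * ((norm v)\<^sup>2 * measure M A)
      - 2 * t * (\<integral>x. indicator A x * ((x - a) \<bullet> v) \<partial>M)"
    using A_M iG iA iI by (simp add: Bochner_Integration.integral_diff Bochner_Integration.integral_add)
  finally show "0 \<le> t\<^sup>2 * ((norm v)\<^sup>2 * measure M A) - 2 * t * (\<integral>x. indicator A x * ((x - a) \<bullet> v) \<partial>M)"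
    by simp
qed

lemma cvx_leD:
  assumes "cvx_le M1 M2" "convex_on UNIV f" "integrable M2 f"
  shows "integrable M1 f" "(\<integral>x. f x \<partial>M1) \<le> (\<integral>x. f x \<partial>M2)"
  using assms unfolding cvx_le_def by auto

lemma convex_on_norm_sq: "convex_on UNIV (\<lambda>x::'a::real_inner. (norm x)\<^sup>2)"
proof (rule convex_onI)
  fix t :: real and x y :: 'a
  assume t: "0 < t" "t < 1"
  have "(1 - t) * (norm x)\<^sup>2 + t * (norm y)\<^sup>2 - (norm ((1 - t) *\<^sub>R x + t *\<^sub>R y))\<^sup>2
      = t * (1 - t) * (norm (x - y))\<^sup>2"
    unfolding power2_norm_eq_inner
    by (simp add: inner_add_left inner_add_right inner_diff_left inner_diff_right inner_commute algebra_simps)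
  moreover have "0 \<le> t * (1 - t) * (norm (x - y))\<^sup>2" using t by simp
  ultimately show "(norm ((1 - t) *\<^sub>R x + t *\<^sub>R y))\<^sup>2 \<le> (1 - t) * (norm x)\<^sup>2 + t * (norm y)\<^sup>2"
    by linarith
qed simp

lemma P2_if_cvx_le:
  assumes "cvx_le \<nu> \<mu>" "P2 \<mu>" "prob_space \<nu>" "sets \<nu> = sets borel"
  shows "P2 \<nu>"
  using assms cvx_leD(1)[OF assms(1) convex_on_norm_sq P2D(3)[OF assms(2)]] unfolding P2_def by auto

definition voronoi_cell :: "'a::metric_space set \<Rightarrow> 'a \<Rightarrow> 'a set" where
  "voronoi_cell G a = {x. dist x a = infdist x G}"

lemma voronoi_cell_sets [measurable]: "voronoi_cell G a \<in> sets borel"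
proof -
  have "closed (voronoi_cell G a)" unfolding voronoi_cell_def
    by (intro closed_Collect_eq continuous_on_infdist continuous_on_dist continuous_on_id continuous_on_const)
  then show ?thesis by simp
qed

fun first_nearest :: "'a::metric_space set \<Rightarrow> 'a \<Rightarrow> 'a list \<Rightarrow> 'a \<Rightarrow> 'a" where
  "first_nearest G d [] x = d"
| "first_nearest G d (c # cs) x = (if x \<in> voronoi_cell G c then c else first_nearest G d cs x)"

lemma first_nearest_in: "d \<in> G \<Longrightarrow> set cs \<subseteq> G \<Longrightarrow> first_nearest G d cs x \<in> G"
  by (induction cs) auto

lemma dist_first_nearest:
  "\<exists>c\<in>set cs. x \<in> voronoi_cell G c \<Longrightarrow> dist x (first_nearest G d cs x) = infdist x G"
  by (induction cs) (auto simp: voronoi_cell_def)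

lemma borel_measurable_first_nearest:
  "first_nearest G d cs \<in> borel_measurable (borel :: 'a::euclidean_space measure)"
  by (induction cs) (auto intro!: measurable_If_set)

lemma nearest_proj_qproj:
  fixes G :: "'a::euclidean_space set"
  assumes "finite G" "G \<noteq> {}"
  shows "nearest_proj G (qproj G)"
proof -
  obtain cs where cs: "set cs = G" using finite_list[OF assms(1)] by blast
  obtain d where d: "d \<in> G" using assms by auto
  have "nearest_proj G (first_nearest G d cs)"
    unfolding nearest_proj_def
  proof (intro conjI allI borel_measurable_first_nearest)
    fix x
    show "first_nearest G d cs x \<in> G" using first_nearest_in[OF d] cs by simp
    obtain c where "c \<in> G" "infdist x G = dist x c" using infdist_attained[OF assms] by blast
    then show "dist x (first_nearest G d cs x) = infdist x G"
      using cs by (intro dist_first_nearest) (auto simp: voronoi_cell_def)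
  qed
  then show ?thesis unfolding qproj_def by (rule someI[where P = "nearest_proj G"])
qed

lemma
  fixes G :: "'a::euclidean_space set"
  assumes "finite G" "G \<noteq> {}"
  shows borel_measurable_qproj: "qproj G \<in> borel_measurable borel"
    and qproj_in: "qproj G x \<in> G"
    and dist_qproj: "dist x (qproj G x) = infdist x G"
  using nearest_proj_qproj[OF assms] unfolding nearest_proj_def by auto

lemma sum_indicator_vimage_singleton:
  assumes "finite G" "p x \<in> G"
  shows "(\<Sum>a\<in>G. indicator (p -` {a}) x * f a x) = (f (p x) x :: real)"
proof -
  have "(\<Sum>a\<in>G. indicator (p -` {a}) x * f a x) = (\<Sum>a\<in>G. if a = p x then f a x else 0)"
    by (intro sum.cong) (auto simp: indicator_def)
  then show ?thesis using assms by (simp add: sum.delta')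
qed

lemma max_gain_zero_eq_qproj:
  fixes G :: "'a::euclidean_space set"
  assumes "finite G" "G \<noteq> {}"
  shows "max_gain G (\<lambda>_. 0) x = (norm (qproj G x))\<^sup>2 + 2 * ((x - qproj G x) \<bullet> qproj G x)"
proof -
  have "max_gain G (\<lambda>_. 0) x = (norm x)\<^sup>2 - (dist x (qproj G x))\<^sup>2"
    by (simp add: max_gain_zero[OF assms] dist_qproj[OF assms])
  also have "\<dots> = (norm (qproj G x))\<^sup>2 + 2 * ((x - qproj G x) \<bullet> qproj G x)"
    unfolding dist_norm power2_norm_eq_inner
    by (simp add: inner_diff_left inner_diff_right inner_commute algebra_simps)
  finally show ?thesis .
qed

lemma integral_max_gain_eq_integral_qproj:
  fixes M :: "'a::euclidean_space measure"
  assumes opt: "opt_quantizer M N G"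
  shows "(\<integral>x. max_gain G (\<lambda>_. 0) x \<partial>M) = (\<integral>x. (norm (qproj G x))\<^sup>2 \<partial>M)"
proof -
  note o = opt_quantizerD[OF opt]
  define p where "p = qproj G"
  have p: "p \<in> borel_measurable borel" "\<And>x. p x \<in> G" "\<And>x. dist x (p x) = infdist x G"
    unfolding p_def by (simp_all add: borel_measurable_qproj qproj_in dist_qproj o(2,3))
  have fibre: "p -` {a} \<in> sets borel" for a
    using measurable_sets[OF p(1), of "{a}"] by simp
  have stationary: "(\<integral>x. indicator (p -` {a}) x * ((x - a) \<bullet> a) \<partial>M) = 0" if "a \<in> G" for a
    using p(2,3) by (intro opt_quantizer_stationary[OF opt that fibre]) auto
  have i_fibre: "integrable M (\<lambda>x. indicator (p -` {a}) x * ((x - a) \<bullet> a))" for a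
    by (rule integrable_indicator_inner[OF o(1) fibre])
  have i_sum: "integrable M (\<lambda>x. \<Sum>a\<in>G. indicator (p -` {a}) x * ((x - a) \<bullet> a))"
    using i_fibre by simp
  have i_p: "integrable M (\<lambda>x. (norm (p x))\<^sup>2)"
  proof (rule integrable_quadratic_growth[OF o(1)])
    show "(\<lambda>x. (norm (p x))\<^sup>2) \<in> borel_measurable borel"
      using measurable_compose[OF p(1) borel_measurable_power[OF borel_measurable_norm], of 2] by simp
    show "\<bar>(norm (p x))\<^sup>2\<bar> \<le> 0 * (norm x)\<^sup>2 + (\<Sum>c\<in>G. (norm c)\<^sup>2)" for x
      using member_le_sum[of "p x" G "\<lambda>c. (norm c)\<^sup>2", OF p(2) _ o(2)] by simp
  qed
  have "max_gain G (\<lambda>_. 0) x = (norm (p x))\<^sup>2 + 2 * (\<Sum>a\<in>G. indicator (p -` {a}) x * ((x - a) \<bullet> a))"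
    for x
    unfolding sum_indicator_vimage_singleton[of G p x "\<lambda>a x. (x - a) \<bullet> a", OF o(2) p(2)]
    unfolding p_def by (rule max_gain_zero_eq_qproj[OF o(2,3)])
  then have "(\<integral>x. max_gain G (\<lambda>_. 0) x \<partial>M)
      = (\<integral>x. (norm (p x))\<^sup>2 + 2 * (\<Sum>a\<in>G. indicator (p -` {a}) x * ((x - a) \<bullet> a)) \<partial>M)"
    by simp
  also have "\<dots> = (\<integral>x. (norm (p x))\<^sup>2 \<partial>M)
      + 2 * (\<Sum>a\<in>G. \<integral>x. indicator (p -` {a}) x * ((x - a) \<bullet> a) \<partial>M)"
    by (simp only: Bochner_Integration.integral_add[OF i_p integrable_mult_right[OF i_sum]]
        Bochner_Integration.integral_mult_right[OF i_sum] Bochner_Integration.integral_sum[OF i_fibre])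
  also have "\<dots> = (\<integral>x. (norm (p x))\<^sup>2 \<partial>M)"
    using stationary by simp
  finally show ?thesis unfolding p_def .
qed

lemma integral_max_gain_quant_image:
  fixes M :: "'a::euclidean_space measure"
  assumes opt: "opt_quantizer M N G"
  shows "(\<integral>x. max_gain G (\<lambda>_. 0) x \<partial>quant_image M G) = (\<integral>x. max_gain G (\<lambda>_. 0) x \<partial>M)"
proof -
  note o = opt_quantizerD[OF opt]
  have "(\<integral>x. max_gain G (\<lambda>_. 0) x \<partial>quant_image M G) = (\<integral>x. max_gain G (\<lambda>_. 0) (qproj G x) \<partial>M)"
    unfolding quant_image_def
    by (rule integral_distr[OF measurable_sets_borelI[OF P2D(2)[OF o(1)] borel_measurable_qproj[OF o(2,3)]]
          borel_measurable_max_gain[OF o(2)]])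
  also have "\<dots> = (\<integral>x. (norm (qproj G x))\<^sup>2 \<partial>M)"
    by (simp add: max_gain_zero[OF o(2,3)] qproj_in[OF o(2,3)])
  also have "\<dots> = (\<integral>x. max_gain G (\<lambda>_. 0) x \<partial>M)"
    by (rule integral_max_gain_eq_integral_qproj[OF opt, symmetric])
  finally show ?thesis .
qed

lemma integral_infdist_sq_eq:
  assumes "P2 M" "finite G" "G \<noteq> {}"
  shows "(\<integral>x. (infdist x G)\<^sup>2 \<partial>M) = (\<integral>x. (norm x)\<^sup>2 \<partial>M) - (\<integral>x. max_gain G (\<lambda>_. 0) x \<partial>M)"
proof -
  have "(\<lambda>x. (infdist x G)\<^sup>2) = (\<lambda>x. (norm x)\<^sup>2 - max_gain G (\<lambda>_. 0) x)"
    by (simp add: max_gain_zero[OF assms(2,3)])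
  moreover have "integrable M (max_gain G (\<lambda>_. 0))" by (rule integrable_max_gain[OF assms, of _ 0]) simp
  ultimately show ?thesis using P2D(3)[OF assms(1)] by simp
qed

lemma integral_max_gain_cvx_sandwich:
  fixes \<mu> \<nu> :: "'a::euclidean_space measure"
  assumes opt: "opt_quantizer \<mu> N G" and \<nu>: "P2 \<nu>"
    and lower: "cvx_le (quant_image \<mu> G) \<nu>" and upper: "cvx_le \<nu> \<mu>"
  shows "(\<integral>x. max_gain G (\<lambda>_. 0) x \<partial>\<nu>) = (\<integral>x. max_gain G (\<lambda>_. 0) x \<partial>\<mu>)"
proof -
  note o = opt_quantizerD[OF opt]
  have cvx: "convex_on UNIV (max_gain G (\<lambda>_. 0))" by (rule convex_on_max_gain[OF o(2,3)])
  have i\<mu>: "integrable \<mu> (max_gain G (\<lambda>_. 0))" by (rule integrable_max_gain[OF o(1-3), of _ 0]) simp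
  have i\<nu>: "integrable \<nu> (max_gain G (\<lambda>_. 0))" by (rule integrable_max_gain[OF \<nu> o(2,3), of _ 0]) simp
  show ?thesis
    using cvx_leD(2)[OF upper cvx i\<mu>] cvx_leD(2)[OF lower cvx i\<nu>] integral_max_gain_quant_image[OF opt]
    by linarith
qed

lemma opt_quantizer_if_cvx_le:
  fixes \<mu> \<nu> :: "'a::euclidean_space measure"
  assumes opt: "opt_quantizer \<mu> N G" and \<nu>: "P2 \<nu>" and upper: "cvx_le \<nu> \<mu>"
    and eq: "(\<integral>x. max_gain G (\<lambda>_. 0) x \<partial>\<nu>) = (\<integral>x. max_gain G (\<lambda>_. 0) x \<partial>\<mu>)"
  shows "opt_quantizer \<nu> N G"
  unfolding opt_quantizer_def
proof (intro conjI allI impI \<nu>)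
  note o = opt_quantizerD[OF opt]
  show "admissible_codebook N G" by (rule o(4))
  fix G' :: "'a set"
  assume G': "admissible_codebook N G'"
  then obtain c c' where G'_ne: "finite G'" "G' \<noteq> {}" and c: "c \<in> G" and c': "c' \<in> G'"
    using o(3) unfolding admissible_codebook_def by auto
  have i\<mu>: "integrable \<mu> (max_gain G' (\<lambda>_. 0))" by (rule integrable_max_gain[OF o(1) G'_ne, of _ 0]) simp
  have "(\<integral>x. max_gain G' (\<lambda>_. 0) x \<partial>\<nu>) \<le> (\<integral>x. max_gain G' (\<lambda>_. 0) x \<partial>\<mu>)"
    by (rule cvx_leD(2)[OF upper convex_on_max_gain[OF G'_ne] i\<mu>])
  then have "(\<integral>x. (infdist x G)\<^sup>2 \<partial>\<nu>) \<le> (\<integral>x. (infdist x G')\<^sup>2 \<partial>\<nu>)"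
    using integral_infdist_sq_le_if_opt_quantizer[OF opt G'] eq
      integral_infdist_sq_eq[OF \<nu> o(2,3)] integral_infdist_sq_eq[OF \<nu> G'_ne]
      integral_infdist_sq_eq[OF o(1-3)] integral_infdist_sq_eq[OF o(1) G'_ne]
    by linarith
  then show "distortion \<nu> G \<le> distortion \<nu> G'"
    by (simp add: distortion_eq_integral[OF \<nu> c] distortion_eq_integral[OF \<nu> c'] ennreal_leI)
qed

lemma exists_other_nearest:
  fixes G :: "'a::heine_borel set"
  assumes "finite G" "G \<noteq> {}" "x \<notin> voronoi_cell G a"
  shows "\<exists>b\<in>G. b \<noteq> a \<and> dist x b = infdist x G"
proof -
  obtain b where "b \<in> G" "infdist x G = dist x b" using infdist_attained[OF assms(1,2)] by blast
  then show ?thesis using assms(3) unfolding voronoi_cell_def by auto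
qed

lemma integral_tie_inner_eq_0:
  fixes M :: "'a::euclidean_space measure"
  assumes opt: "opt_quantizer M N G" and a: "a \<in> G" and b: "b \<in> G" "b \<noteq> a"
  shows "(\<integral>x. indicator (voronoi_cell G a \<inter> voronoi_cell G b) x * ((x - a) \<bullet> v) \<partial>M) = 0"
proof -
  note o = opt_quantizerD[OF opt]
  let ?A = "voronoi_cell G a" and ?B = "voronoi_cell G b"
  have "(\<integral>x. indicator ?A x * ((x - a) \<bullet> v) \<partial>M) = 0"
    by (rule opt_quantizer_stationary[OF opt a voronoi_cell_sets])
      (auto simp: voronoi_cell_def intro: exists_other_nearest[OF o(2,3)])
  moreover have "(\<integral>x. indicator (?A - ?B) x * ((x - a) \<bullet> v) \<partial>M) = 0"
    using b by (intro opt_quantizer_stationary[OF opt a])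
      (auto simp: voronoi_cell_def intro: exists_other_nearest[OF o(2,3)])
  moreover have "indicator (?A \<inter> ?B) x * ((x - a) \<bullet> v)
      = indicator ?A x * ((x - a) \<bullet> v) - indicator (?A - ?B) x * ((x - a) \<bullet> v)" for x
    by (auto simp: indicator_def)
  ultimately show ?thesis
    using Bochner_Integration.integral_diff[OF integrable_indicator_inner[OF o(1) voronoi_cell_sets]
        integrable_indicator_inner[OF o(1), of "?A - ?B"]]
    by simp
qed

lemma voronoi_tie_null:
  fixes M :: "'a::euclidean_space measure"
  assumes opt: "opt_quantizer M N G" and a: "a \<in> G" and b: "b \<in> G" "b \<noteq> a"
  shows "voronoi_cell G a \<inter> voronoi_cell G b \<in> null_sets M"
proof -
  note o = opt_quantizerD[OF opt]
  interpret prob_space M by (rule P2D(1)[OF o(1)])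
  define S where "S = voronoi_cell G a \<inter> voronoi_cell G b"
  have S: "S \<in> sets borel" and S_M: "S \<in> sets M"
    unfolding S_def using P2D(2)[OF o(1)] by auto
  have a_part: "(\<integral>x. indicator S x * ((x - a) \<bullet> (b - a)) \<partial>M) = 0"
    unfolding S_def by (rule integral_tie_inner_eq_0[OF opt a b])
  have b_part: "(\<integral>x. indicator S x * ((x - b) \<bullet> (b - a)) \<partial>M) = 0"
    using integral_tie_inner_eq_0[OF opt b(1) a b(2)[symmetric]] unfolding S_def by (simp add: Int_commute)
  have diff: "indicator S x * (norm (b - a))\<^sup>2
      = indicator S x * ((x - a) \<bullet> (b - a)) - indicator S x * ((x - b) \<bullet> (b - a))" for x
    unfolding power2_norm_eq_inner
    by (simp add: indicator_def inner_diff_left inner_diff_right inner_commute algebra_simps)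
  have "measure M S * (norm (b - a))\<^sup>2 = (\<integral>x. indicator S x * (norm (b - a))\<^sup>2 \<partial>M)"
    using S_M by simp
  also have "\<dots> = (\<integral>x. indicator S x * ((x - a) \<bullet> (b - a)) - indicator S x * ((x - b) \<bullet> (b - a)) \<partial>M)"
    by (simp only: diff)
  also have "\<dots> = 0"
    using Bochner_Integration.integral_diff[OF integrable_indicator_inner[OF o(1) S] integrable_indicator_inner[OF o(1) S]]
      a_part b_part by simp
  finally have "measure M S * (norm (b - a))\<^sup>2 = 0" .
  then show ?thesis
    using b S_M unfolding S_def[symmetric] by (simp add: emeasure_eq_measure null_sets_def)
qed

definition strict_cell :: "'a::metric_space set \<Rightarrow> 'a \<Rightarrow> 'a set" where
  "strict_cell G a = {x. \<forall>b\<in>G. b \<noteq> a \<longrightarrow> dist x a < dist x b}"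

definition margin_cell :: "'a::metric_space set \<Rightarrow> 'a \<Rightarrow> real \<Rightarrow> 'a set" where
  "margin_cell G a e = {x. \<forall>b\<in>G. b \<noteq> a \<longrightarrow> (dist x a)\<^sup>2 + e \<le> (dist x b)\<^sup>2}"

lemma strict_cell_sets [measurable]:
  fixes G :: "'a::euclidean_space set"
  assumes "finite G"
  shows "strict_cell G a \<in> sets borel"
proof -
  have "strict_cell G a = (\<Inter>b\<in>G - {a}. {x. dist x a < dist x b})"
    unfolding strict_cell_def by auto
  also have "open \<dots>"
    using assms by (intro open_INT ballI open_Collect_less continuous_intros) auto
  finally show ?thesis by simp
qed

lemma margin_cell_sets [measurable]:
  fixes G :: "'a::euclidean_space set"
  shows "margin_cell G a e \<in> sets borel"
proof -
  have "margin_cell G a e = (\<Inter>b\<in>G - {a}. {x. (dist x a)\<^sup>2 + e \<le> (dist x b)\<^sup>2})"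
    unfolding margin_cell_def by auto
  also have "closed \<dots>"
    by (intro closed_INT ballI closed_Collect_le continuous_intros)
  finally show ?thesis by simp
qed

lemma strict_cell_subset_vimage_qproj:
  fixes G :: "'a::euclidean_space set"
  assumes "finite G" "G \<noteq> {}" "a \<in> G"
  shows "strict_cell G a \<subseteq> qproj G -` {a}"
proof
  fix x assume x: "x \<in> strict_cell G a"
  have "dist x (qproj G x) \<le> dist x a"
    using dist_qproj[OF assms(1,2)] infdist_le[OF assms(3)] by simp
  moreover have "qproj G x \<noteq> a \<Longrightarrow> dist x a < dist x (qproj G x)"
    using x qproj_in[OF assms(1,2)] unfolding strict_cell_def by blast
  ultimately show "x \<in> qproj G -` {a}" by force
qed

lemma vimage_qproj_subset:
  fixes G :: "'a::euclidean_space set"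
  assumes "finite G" "G \<noteq> {}"
  shows "qproj G -` {a} \<subseteq> strict_cell G a \<union> (\<Union>b\<in>G - {a}. voronoi_cell G a \<inter> voronoi_cell G b)"
proof
  fix x assume x: "x \<in> qproj G -` {a}"
  then have a: "x \<in> voronoi_cell G a"
    using dist_qproj[OF assms, of x] unfolding voronoi_cell_def by simp
  show "x \<in> strict_cell G a \<union> (\<Union>b\<in>G - {a}. voronoi_cell G a \<inter> voronoi_cell G b)"
  proof (cases "x \<in> strict_cell G a")
    case False
    then obtain b where b: "b \<in> G" "b \<noteq> a" "dist x b \<le> dist x a"
      unfolding strict_cell_def by (auto simp: not_less)
    then have "x \<in> voronoi_cell G b"
      using a infdist_le[OF b(1), of x] unfolding voronoi_cell_def by simp
    then show ?thesis using a b by blast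
  qed simp
qed

lemma strict_cell_eq_UN_margin_cell:
  assumes "finite G"
  shows "strict_cell G a = (\<Union>n. margin_cell G a (inverse (Suc n)))"
proof (intro equalityI subsetI)
  fix x assume x: "x \<in> strict_cell G a"
  have "\<forall>b\<in>G - {a}. \<forall>\<^sub>F n in sequentially. inverse (Suc n) < (dist x b)\<^sup>2 - (dist x a)\<^sup>2"
  proof
    fix b assume "b \<in> G - {a}"
    then have "dist x a < dist x b"
      using x unfolding strict_cell_def by blast
    then have "(dist x a)\<^sup>2 < (dist x b)\<^sup>2"
      by (simp add: power_strict_mono)
    then show "\<forall>\<^sub>F n in sequentially. inverse (Suc n) < (dist x b)\<^sup>2 - (dist x a)\<^sup>2"
      by (intro order_tendstoD(2)[OF LIMSEQ_inverse_real_of_nat]) simp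
  qed
  then have "\<forall>\<^sub>F n in sequentially. \<forall>b\<in>G - {a}. inverse (Suc n) < (dist x b)\<^sup>2 - (dist x a)\<^sup>2"
    using assms by (intro eventually_ball_finite) auto
  then obtain n where n: "\<forall>b\<in>G - {a}. inverse (Suc n) < (dist x b)\<^sup>2 - (dist x a)\<^sup>2"
    unfolding eventually_sequentially by blast
  have "x \<in> margin_cell G a (inverse (Suc n))"
    unfolding margin_cell_def
  proof (intro CollectI ballI impI)
    fix b assume "b \<in> G" "b \<noteq> a"
    then have "inverse (Suc n) < (dist x b)\<^sup>2 - (dist x a)\<^sup>2" using n by simp
    then show "(dist x a)\<^sup>2 + inverse (Suc n) \<le> (dist x b)\<^sup>2" by linarith
  qed
  then show "x \<in> (\<Union>n. margin_cell G a (inverse (Suc n)))" by blast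
next
  fix x assume "x \<in> (\<Union>n. margin_cell G a (inverse (Suc n)))"
  then obtain n where n: "x \<in> margin_cell G a (inverse (Suc n))" by blast
  show "x \<in> strict_cell G a"
    unfolding strict_cell_def
  proof (intro CollectI ballI impI)
    fix b assume "b \<in> G" "b \<noteq> a"
    then have "(dist x a)\<^sup>2 + inverse (Suc n) \<le> (dist x b)\<^sup>2"
      using n unfolding margin_cell_def by simp
    moreover have "0 < inverse (real (Suc n))" by simp
    ultimately have "(dist x a)\<^sup>2 < (dist x b)\<^sup>2" by linarith
    then show "dist x a < dist x b" by (rule power2_less_imp_less) simp
  qed
qed

lemma incseq_margin_cell: "incseq (\<lambda>n. margin_cell G a (inverse (Suc n)))"
proof (rule incseq_SucI)
  fix n
  have le: "inverse (real (Suc (Suc n))) \<le> inverse (Suc n)" by (simp add: field_simps)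
  show "margin_cell G a (inverse (Suc n)) \<subseteq> margin_cell G a (inverse (Suc (Suc n)))"
    unfolding margin_cell_def
  proof (intro subsetI CollectI ballI impI)
    fix x b assume "x \<in> {x. \<forall>b\<in>G. b \<noteq> a \<longrightarrow> (dist x a)\<^sup>2 + inverse (Suc n) \<le> (dist x b)\<^sup>2}"
      and "b \<in> G" "b \<noteq> a"
    then have "(dist x a)\<^sup>2 + inverse (Suc n) \<le> (dist x b)\<^sup>2" by simp
    then show "(dist x a)\<^sup>2 + inverse (Suc (Suc n)) \<le> (dist x b)\<^sup>2" using le by linarith
  qed
qed

lemma indicator_margin_cell_le_max_gain_drop:
  fixes G :: "'a::euclidean_space set"
  assumes G: "finite G" "G \<noteq> {}" and a: "a \<in> G" and e: "0 < e"
  shows "indicator (margin_cell G a e) x * e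
    \<le> max_gain G (\<lambda>_. 0) x - max_gain G (\<lambda>c. if c = a then - e else 0) x"
proof -
  obtain c where c: "c \<in> G" "max_gain G (\<lambda>c. if c = a then - e else 0) x
      = affine_gain c x + (if c = a then - e else 0)"
    by (rule max_gain_attained[OF G])
  have "affine_gain a x \<le> max_gain G (\<lambda>_. 0) x" "affine_gain c x \<le> max_gain G (\<lambda>_. 0) x"
    using max_gain_ge[OF G(1) a, of x "\<lambda>_. 0"] max_gain_ge[OF G(1) c(1), of x "\<lambda>_. 0"] by simp_all
  moreover have "affine_gain c x + e \<le> affine_gain a x" if "x \<in> margin_cell G a e" "c \<noteq> a"
    using that c(1) dist_sq_eq_affine_gain[of x a] dist_sq_eq_affine_gain[of x c]
    unfolding margin_cell_def by force
  ultimately show ?thesis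
    using c e by (cases "x \<in> margin_cell G a e"; cases "c = a") auto
qed

lemma max_gain_drop_le_indicator_strict_cell:
  fixes G :: "'a::euclidean_space set"
  assumes G: "finite G" "G \<noteq> {}" and a: "a \<in> G" and e: "0 < e"
  shows "max_gain G (\<lambda>_. 0) x - max_gain G (\<lambda>c. if c = a then - e else 0) x
    \<le> indicator (strict_cell G a) x * e"
proof (cases "x \<in> strict_cell G a")
  case True
  then show ?thesis
    using max_gain_perturb_bound[OF G, of "\<lambda>c. if c = a then - e else 0" e x] e by (simp add: abs_le_iff)
next
  case False
  then obtain b where b: "b \<in> G" "b \<noteq> a" "dist x b \<le> dist x a"
    unfolding strict_cell_def by (auto simp: not_less)
  then have ab: "affine_gain a x \<le> affine_gain b x"
    using dist_sq_eq_affine_gain[of x a] dist_sq_eq_affine_gain[of x b] power_mono[OF b(3), of 2] by simp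
  obtain c where c: "c \<in> G" "max_gain G (\<lambda>_. 0) x = affine_gain c x + 0"
    by (rule max_gain_attained[OF G])
  have "max_gain G (\<lambda>_. 0) x \<le> max_gain G (\<lambda>c. if c = a then - e else 0) x"
  proof (cases "c = a")
    case True
    then show ?thesis using c ab b max_gain_ge[OF G(1) b(1), of x "\<lambda>c. if c = a then - e else 0"] by simp
  next
    case False
    then show ?thesis using c max_gain_ge[OF G(1) c(1), of x "\<lambda>c. if c = a then - e else 0"] by simp
  qed
  then show ?thesis using False by simp
qed

lemma measure_margin_cell_le:
  fixes \<mu> \<nu> :: "'a::euclidean_space measure"
  assumes \<mu>: "P2 \<mu>" and \<nu>: "P2 \<nu>" and G: "finite G" "G \<noteq> {}" and a: "a \<in> G"
    and upper: "cvx_le \<nu> \<mu>"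
    and eq: "(\<integral>x. max_gain G (\<lambda>_. 0) x \<partial>\<nu>) = (\<integral>x. max_gain G (\<lambda>_. 0) x \<partial>\<mu>)"
    and e: "0 < e"
  shows "measure \<mu> (margin_cell G a e) \<le> measure \<nu> (strict_cell G a)"
proof -
  interpret \<mu>: prob_space \<mu> by (rule P2D(1)[OF \<mu>])
  interpret \<nu>: prob_space \<nu> by (rule P2D(1)[OF \<nu>])
  define \<phi> where "\<phi> = max_gain G (\<lambda>_. 0)"
  define \<psi> where "\<psi> = max_gain G (\<lambda>c. if c = a then - e else 0)"
  have w_bound: "\<bar>(if c = a then - e else 0)\<bar> \<le> e" for c using e by simp
  have i\<phi>\<mu>: "integrable \<mu> \<phi>" and i\<phi>\<nu>: "integrable \<nu> \<phi>"
    unfolding \<phi>_def by (rule integrable_max_gain[OF \<mu> G, of _ 0] integrable_max_gain[OF \<nu> G, of _ 0]; simp)+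
  have i\<psi>\<mu>: "integrable \<mu> \<psi>" and i\<psi>\<nu>: "integrable \<nu> \<psi>"
    unfolding \<psi>_def by (rule integrable_max_gain[OF \<mu> G w_bound] integrable_max_gain[OF \<nu> G w_bound])+
  have sets: "margin_cell G a e \<in> sets \<mu>" "strict_cell G a \<in> sets \<nu>"
    using P2D(2)[OF \<mu>] P2D(2)[OF \<nu>] G(1) by auto
  have "measure \<mu> (margin_cell G a e) * e = (\<integral>x. indicator (margin_cell G a e) x * e \<partial>\<mu>)"
    using sets by simp
  also have "\<dots> \<le> (\<integral>x. \<phi> x - \<psi> x \<partial>\<mu>)"
    using sets i\<phi>\<mu> i\<psi>\<mu> unfolding \<phi>_def \<psi>_def
    by (intro integral_mono indicator_margin_cell_le_max_gain_drop[OF G a e] Bochner_Integration.integrable_diff)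
      (auto simp: \<mu>.emeasure_eq_measure)
  also have "\<dots> = (\<integral>x. \<phi> x \<partial>\<mu>) - (\<integral>x. \<psi> x \<partial>\<mu>)" by (rule Bochner_Integration.integral_diff[OF i\<phi>\<mu> i\<psi>\<mu>])
  also have "\<dots> \<le> (\<integral>x. \<phi> x \<partial>\<nu>) - (\<integral>x. \<psi> x \<partial>\<nu>)"
    using cvx_leD(2)[OF upper convex_on_max_gain[OF G] i\<psi>\<mu>[unfolded \<psi>_def]] eq unfolding \<phi>_def \<psi>_def by simp
  also have "\<dots> = (\<integral>x. \<phi> x - \<psi> x \<partial>\<nu>)" by (rule Bochner_Integration.integral_diff[OF i\<phi>\<nu> i\<psi>\<nu>, symmetric])
  also have "\<dots> \<le> (\<integral>x. indicator (strict_cell G a) x * e \<partial>\<nu>)"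
    using sets i\<phi>\<nu> i\<psi>\<nu> unfolding \<phi>_def \<psi>_def
    by (intro integral_mono max_gain_drop_le_indicator_strict_cell[OF G a e] Bochner_Integration.integrable_diff)
      (auto simp: \<nu>.emeasure_eq_measure)
  also have "\<dots> = measure \<nu> (strict_cell G a) * e" using sets by simp
  finally show ?thesis using e by simp
qed

lemma measure_strict_cell_le:
  fixes \<mu> \<nu> :: "'a::euclidean_space measure"
  assumes \<mu>: "P2 \<mu>" and \<nu>: "P2 \<nu>" and G: "finite G" "G \<noteq> {}" and a: "a \<in> G"
    and upper: "cvx_le \<nu> \<mu>"
    and eq: "(\<integral>x. max_gain G (\<lambda>_. 0) x \<partial>\<nu>) = (\<integral>x. max_gain G (\<lambda>_. 0) x \<partial>\<mu>)"
  shows "measure \<mu> (strict_cell G a) \<le> measure \<nu> (strict_cell G a)"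
proof -
  interpret \<mu>: prob_space \<mu> by (rule P2D(1)[OF \<mu>])
  have "emeasure \<mu> (strict_cell G a) = (SUP n. emeasure \<mu> (margin_cell G a (inverse (Suc n))))"
    unfolding strict_cell_eq_UN_margin_cell[OF G(1)]
    by (rule SUP_emeasure_incseq[symmetric]) (use incseq_margin_cell P2D(2)[OF \<mu>] in auto)
  also have "\<dots> \<le> ennreal (measure \<nu> (strict_cell G a))"
    using measure_margin_cell_le[OF \<mu> \<nu> G a upper eq]
    by (intro SUP_least) (simp add: \<mu>.emeasure_eq_measure)
  finally show ?thesis by (simp add: \<mu>.emeasure_eq_measure)
qed

lemma measure_vimage_qproj_le:
  fixes \<mu> \<nu> :: "'a::euclidean_space measure"
  assumes opt: "opt_quantizer \<mu> N G" and \<nu>: "P2 \<nu>" and a: "a \<in> G"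
    and upper: "cvx_le \<nu> \<mu>"
    and eq: "(\<integral>x. max_gain G (\<lambda>_. 0) x \<partial>\<nu>) = (\<integral>x. max_gain G (\<lambda>_. 0) x \<partial>\<mu>)"
  shows "measure \<mu> (qproj G -` {a}) \<le> measure \<nu> (qproj G -` {a})"
proof -
  note o = opt_quantizerD[OF opt]
  interpret \<mu>: prob_space \<mu> by (rule P2D(1)[OF o(1)])
  interpret \<nu>: prob_space \<nu> by (rule P2D(1)[OF \<nu>])
  let ?T = "\<Union>b\<in>G - {a}. voronoi_cell G a \<inter> voronoi_cell G b"
  have T: "?T \<in> null_sets \<mu>"
    using o(2) by (intro null_sets_UN' countable_finite voronoi_tie_null[OF opt a]) auto
  have S: "strict_cell G a \<in> sets \<mu>"
    using P2D(2)[OF o(1)] o(2) by simp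
  have fibre: "qproj G -` {a} \<in> sets \<nu>"
    using measurable_sets[OF borel_measurable_qproj[OF o(2,3)], of "{a}"] P2D(2)[OF \<nu>] by simp
  have "measure \<mu> (qproj G -` {a}) \<le> measure \<mu> (strict_cell G a \<union> ?T)"
    by (rule \<mu>.finite_measure_mono[OF vimage_qproj_subset[OF o(2,3)]]) (use S T in auto)
  also have "\<dots> = measure \<mu> (strict_cell G a)"
    by (rule measure_Un_null_set[OF S T])
  also have "\<dots> \<le> measure \<nu> (strict_cell G a)"
    by (rule measure_strict_cell_le[OF o(1) \<nu> o(2,3) a upper eq])
  also have "\<dots> \<le> measure \<nu> (qproj G -` {a})"
    by (rule \<nu>.finite_measure_mono[OF strict_cell_subset_vimage_qproj[OF o(2,3) a] fibre])
  finally show ?thesis .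
qed

lemma emeasure_distr_finite_range:
  fixes M :: "'a::topological_space measure" and p :: "'a \<Rightarrow> 'b::t1_space"
  assumes M: "sets M = sets borel" and p: "p \<in> borel_measurable borel" "\<And>x. p x \<in> G"
    and G: "finite G" and A: "A \<in> sets borel"
  shows "emeasure (distr M borel p) A = (\<Sum>a\<in>A \<inter> G. emeasure M (p -` {a}))"
proof -
  have sp: "space M = UNIV" using sets_eq_imp_space_eq[OF M] by simp
  have pM: "p \<in> measurable M borel" by (rule measurable_sets_borelI[OF M p(1)])
  have AG: "A \<inter> G \<in> sets borel"
    using A borel_closed[OF finite_imp_closed[OF G]] by (rule sets.Int)
  have "emeasure (distr M borel p) A = emeasure (distr M borel p) (A \<inter> G)"
    using emeasure_distr[OF pM A] emeasure_distr[OF pM AG] p(2) by (simp add: vimage_def)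
  also have "\<dots> = (\<Sum>a\<in>A \<inter> G. emeasure (distr M borel p) {a})"
    using G by (intro emeasure_eq_sum_singleton) auto
  also have "\<dots> = (\<Sum>a\<in>A \<inter> G. emeasure M (p -` {a}))"
    by (simp add: emeasure_distr[OF pM] sp)
  finally show ?thesis .
qed

lemma sum_measure_vimage_singleton:
  fixes M :: "'a::topological_space measure" and p :: "'a \<Rightarrow> 'b::t1_space"
  assumes "prob_space M" and M: "sets M = sets borel"
    and p: "p \<in> borel_measurable borel" "\<And>x. p x \<in> G" and G: "finite G"
  shows "(\<Sum>a\<in>G. measure M (p -` {a})) = 1"
proof -
  interpret prob_space M by fact
  have pM: "p \<in> measurable M borel" by (rule measurable_sets_borelI[OF M p(1)])
  have G_borel: "G \<in> sets borel" by (rule borel_closed[OF finite_imp_closed[OF G]])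
  have "ennreal (\<Sum>a\<in>G. measure M (p -` {a})) = emeasure (distr M borel p) G"
    using emeasure_distr_finite_range[OF M p G G_borel] by (simp add: emeasure_eq_measure)
  also have "\<dots> = 1"
    using emeasure_distr[OF pM G_borel] p(2) emeasure_space_1 by (simp add: vimage_def)
  finally show ?thesis by simp
qed

lemma distr_eq_if_measure_vimage_le:
  fixes M M' :: "'a::topological_space measure" and p :: "'a \<Rightarrow> 'b::t1_space"
  assumes "prob_space M" "prob_space M'" and M: "sets M = sets borel" and M': "sets M' = sets borel"
    and p: "p \<in> borel_measurable borel" "\<And>x. p x \<in> G" and G: "finite G"
    and le: "\<And>a. a \<in> G \<Longrightarrow> measure M (p -` {a}) \<le> measure M' (p -` {a})"
  shows "distr M borel p = distr M' borel p"
proof (rule measure_eqI)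
  interpret M: prob_space M by fact
  interpret M': prob_space M' by fact
  have "(\<Sum>a\<in>G. measure M' (p -` {a}) - measure M (p -` {a})) = 0"
    using sum_measure_vimage_singleton[OF assms(1) M p G] sum_measure_vimage_singleton[OF assms(2) M' p G]
    by (simp add: sum_subtractf)
  then have "measure M (p -` {a}) = measure M' (p -` {a})" if "a \<in> G" for a
    using sum_nonneg_eq_0_iff[OF G, of "\<lambda>a. measure M' (p -` {a}) - measure M (p -` {a})"] le that
    by force
  then have "emeasure M (p -` {a}) = emeasure M' (p -` {a})" if "a \<in> G" for a
    using that by (simp add: M.emeasure_eq_measure M'.emeasure_eq_measure)
  then show "emeasure (distr M borel p) A = emeasure (distr M' borel p) A"
    if "A \<in> sets (distr M borel p)" for A
    using that by (simp add: emeasure_distr_finite_range[OF M p G] emeasure_distr_finite_range[OF M' p G])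
qed simp

theorem corollary1:
  fixes \<mu> \<nu> :: "'a::euclidean_space measure" and N :: nat and \<Gamma> :: "'a set"
  assumes "P2 \<mu>" and "N \<ge> 1"
    and "opt_quantizer \<mu> N \<Gamma>"
    and "prob_space \<nu>" and "sets \<nu> = sets borel"
    and "cvx_le (quant_image \<mu> \<Gamma>) \<nu>" and "cvx_le \<nu> \<mu>"
  shows "opt_quantizer \<nu> N \<Gamma> \<and> quant_image \<nu> \<Gamma> = quant_image \<mu> \<Gamma>"
proof
  note o = opt_quantizerD[OF assms(3)]
  have \<nu>: "P2 \<nu>" by (rule P2_if_cvx_le[OF assms(7,1,4,5)])
  have eq: "(\<integral>x. max_gain \<Gamma> (\<lambda>_. 0) x \<partial>\<nu>) = (\<integral>x. max_gain \<Gamma> (\<lambda>_. 0) x \<partial>\<mu>)"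
    by (rule integral_max_gain_cvx_sandwich[OF assms(3) \<nu> assms(6,7)])
  show "opt_quantizer \<nu> N \<Gamma>" by (rule opt_quantizer_if_cvx_le[OF assms(3) \<nu> assms(7) eq])
  have "distr \<mu> borel (qproj \<Gamma>) = distr \<nu> borel (qproj \<Gamma>)"
    using measure_vimage_qproj_le[OF assms(3) \<nu> _ assms(7) eq]
    by (intro distr_eq_if_measure_vimage_le[OF P2D(1)[OF assms(1)] assms(4) P2D(2)[OF assms(1)] assms(5)
        borel_measurable_qproj[OF o(2,3)] qproj_in[OF o(2,3)] o(2)])
  then show "quant_image \<nu> \<Gamma> = quant_image \<mu> \<Gamma>" unfolding quant_image_def by simp
qed

end
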